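(* There exist $5$-qubit UPBs of sizes $8$, $9$ and $10$, and there exists a $6$-qubit UPB of size $9$.
   Context: A product state in $(\mathbb{C}^2)^{\otimes p}$ is a vector $|v_1\rangle\otimes\cdots\otimes|v_p\rangle$ with each $|v_j\rangle\in\mathbb{C}^2$. A $p$-qubit unextendible product basis (UPB) is a finite set $\mathcal{S}\subseteq(\mathbb{C}^2)^{\otimes p}$ of unit product vectors that are pairwise orthogonal, such that no nonzero product vector outside $\mathcal{S}$ is orthogonal to every element of $\mathcal{S}$; its size is its number of elements. *)

theory Defs
  imports Complex_Main
begin

text \<open>The space (C^2)^{tensor p} is modelled as complex-valued functions on
  bit strings (bool lists) of length p; values on other lists are required to be 0.
  Basis index bs corresponds to the computational basis vector |bs_0 ... bs_{p-1}>.\<close>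

definition qidx :: "nat \<Rightarrow> bool list set" where
  "qidx p = {bs. length bs = p}"

definition qvec :: "nat \<Rightarrow> (bool list \<Rightarrow> complex) set" where
  "qvec p = {f. \<forall>bs. length bs \<noteq> p \<longrightarrow> f bs = 0}"

definition qinner :: "nat \<Rightarrow> (bool list \<Rightarrow> complex) \<Rightarrow> (bool list \<Rightarrow> complex) \<Rightarrow> complex" where
  "qinner p f g = (\<Sum>bs\<in>qidx p. cnj (f bs) * g bs)"

definition tensor :: "nat \<Rightarrow> (nat \<Rightarrow> bool \<Rightarrow> complex) \<Rightarrow> bool list \<Rightarrow> complex" where
  "tensor p v = (\<lambda>bs. if length bs = p then (\<Prod>j<p. v j (bs ! j)) else 0)"

definition product_vec :: "nat \<Rightarrow> (bool list \<Rightarrow> complex) \<Rightarrow> bool" where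
  "product_vec p f \<longleftrightarrow> (\<exists>v. f = tensor p v)"

definition is_UPB :: "nat \<Rightarrow> (bool list \<Rightarrow> complex) set \<Rightarrow> bool" where
  "is_UPB p S \<longleftrightarrow>
     finite S \<and>
     (\<forall>s\<in>S. product_vec p s \<and> qinner p s s = 1) \<and>
     (\<forall>s\<in>S. \<forall>t\<in>S. s \<noteq> t \<longrightarrow> qinner p s t = 0) \<and>
     (\<forall>w. product_vec p w \<and> w \<noteq> (\<lambda>_. 0) \<and> w \<notin> S \<longrightarrow> (\<exists>s\<in>S. qinner p s w \<noteq> 0))"

end

theory Submission
  imports Defs
begin

(* All four unextendible product bases are built from real vectors taken from five fixed
   orthonormal bases of C^2: the standard basis and the rotations of it by the angles of the
   Pythagorean triples (3,4,5), (5,12,13), (8,15,17), (7,24,25).  A local vector is named by a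
   label (k, b) -- vector b of basis k -- and a p-qubit product vector by a word of p labels.

   The inner product of two tensors is the product of the local inner products, so two word
   vectors are orthogonal as soon as, at some position, they carry the two vectors of one
   basis.  Any two distinct labels are linearly independent, so a nonzero vector of C^2 is
   orthogonal to at most one label.  Hence a nonzero product vector orthogonal to all words
   yields a "cover": a choice of at most one label per party such that every word uses the
   chosen label at some party. *)

subsection \<open>Inner products of tensor products\<close>

definition ip2 :: "(bool \<Rightarrow> complex) \<Rightarrow> (bool \<Rightarrow> complex) \<Rightarrow> complex" where
  "ip2 a b = cnj (a False) * b False + cnj (a True) * b True"

lemma qidx_0: "qidx 0 = {[]}"
  by (auto simp: qidx_def)

lemma qidx_Suc: "qidx (Suc p) = (\<lambda>(b, bs). b # bs) ` (UNIV \<times> qidx p)"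
  by (auto simp: qidx_def image_iff length_Suc_conv)

lemma tensor_Cons:
  "length bs = p \<Longrightarrow> tensor (Suc p) u (b # bs) = u 0 b * tensor p (\<lambda>j. u (Suc j)) bs"
  by (simp add: tensor_def prod.lessThan_Suc_shift del: prod.lessThan_Suc)

text \<open>The inner product of two product vectors is the product of the local inner products;
  this is the only way the inner product of the tensor space enters the argument.\<close>
lemma qinner_tensor:
  "qinner p (tensor p u) (tensor p v) = (\<Prod>j<p. ip2 (u j) (v j))"
proof (induction p arbitrary: u v)
  case 0
  then show ?case by (simp add: qinner_def qidx_0 tensor_def)
next
  case (Suc p)
  let ?u' = "\<lambda>j. u (Suc j)" and ?v' = "\<lambda>j. v (Suc j)"
  have inj: "inj_on (\<lambda>(b, bs). b # bs) (UNIV \<times> qidx p)"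
    by (auto simp: inj_on_def)
  have "qinner (Suc p) (tensor (Suc p) u) (tensor (Suc p) v)
      = (\<Sum>(b, bs)\<in>UNIV \<times> qidx p. (cnj (u 0 b) * v 0 b) *
            (cnj (tensor p ?u' bs) * tensor p ?v' bs))"
    unfolding qinner_def qidx_Suc sum.reindex[OF inj]
    by (rule sum.cong) (auto simp: qidx_def tensor_Cons)
  also have "\<dots> = (\<Sum>b\<in>UNIV. cnj (u 0 b) * v 0 b) * qinner p (tensor p ?u') (tensor p ?v')"
    unfolding qinner_def sum_product by (simp add: sum.cartesian_product case_prod_beta)
  also have "\<dots> = ip2 (u 0) (v 0) * qinner p (tensor p ?u') (tensor p ?v')"
    by (simp add: ip2_def UNIV_bool add.commute)
  also have "\<dots> = (\<Prod>j<Suc p. ip2 (u j) (v j))"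
    by (simp add: Suc.IH prod.lessThan_Suc_shift del: prod.lessThan_Suc)
  finally show ?case .
qed

lemma tensor_zero_factor:
  assumes "j < p" and "v j = (\<lambda>_. 0)"
  shows "tensor p v = (\<lambda>_. 0)"
proof
  fix bs
  show "tensor p v bs = 0"
    using assms by (auto simp: tensor_def intro!: prod_zero bexI[of _ j])
qed

subsection \<open>Five orthonormal bases of C^2\<close>

type_synonym label = "nat \<times> bool"

text \<open>Cosine and sine of the rotation defining basis k (for k < 5).\<close>
definition rot :: "nat \<Rightarrow> real \<times> real" where
  "rot k = (if k = 0 then (1, 0) else if k = 1 then (3/5, 4/5) else if k = 2 then (5/13, 12/13)
            else if k = 3 then (8/17, 15/17) else (7/25, 24/25))"

text \<open>Basis k consists of (c, s) (label (k, False)) and (-s, c) (label (k, True)),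
  where the first coordinate is the component at False.\<close>
definition basis_vec :: "label \<Rightarrow> bool \<Rightarrow> complex" where
  "basis_vec l x = complex_of_real
     (let (c, s) = rot (fst l) in
      if snd l then (if x then c else - s) else (if x then s else c))"

definition opposite :: "label \<Rightarrow> label \<Rightarrow> bool" where
  "opposite l l' \<longleftrightarrow> fst l = fst l' \<and> snd l \<noteq> snd l'"

lemma basis_vec_unit: "ip2 (basis_vec l) (basis_vec l) = 1"
proof -
  have "ip2 (basis_vec l) (basis_vec l)
      = complex_of_real ((fst (rot (fst l)))\<^sup>2 + (snd (rot (fst l)))\<^sup>2)"
    by (cases "snd l") (simp_all add: ip2_def basis_vec_def case_prod_beta power2_eq_square)
  also have "\<dots> = 1"
    by (simp add: rot_def power2_eq_square)
  finally show ?thesis .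
qed

lemma basis_vec_opposite: "opposite l l' \<Longrightarrow> ip2 (basis_vec l) (basis_vec l') = 0"
  by (cases "snd l"; cases "snd l'") (auto simp: ip2_def basis_vec_def opposite_def case_prod_beta)

text \<open>Any two distinct labels give linearly independent vectors: the determinant
  of the two vectors is nonzero (a finite check over the ten labels).\<close>
lemma basis_vec_det_nonzero:
  assumes "fst l < 5" "fst l' < 5" "l \<noteq> l'"
  shows "basis_vec l False * basis_vec l' True - basis_vec l True * basis_vec l' False \<noteq> 0"
proof -
  have five: "k < 5 \<Longrightarrow> k = 0 \<or> k = 1 \<or> k = 2 \<or> k = 3 \<or> k = 4" for k :: nat
    by auto
  obtain k b k' b' where "l = (k, b)" "l' = (k', b')" by force
  with assms show ?thesis
    by (auto dest!: five simp: basis_vec_def rot_def simp flip: of_real_mult of_real_diff)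
qed

lemma orthogonal_to_two_labels:
  assumes "fst l < 5" "fst l' < 5" "l \<noteq> l'"
    and "ip2 (basis_vec l) x = 0" "ip2 (basis_vec l') x = 0"
  shows "x = (\<lambda>_. 0)"
proof -
  let ?a0 = "basis_vec l False" and ?a1 = "basis_vec l True"
    and ?b0 = "basis_vec l' False" and ?b1 = "basis_vec l' True"
  have real: "cnj (basis_vec m y) = basis_vec m y" for m y
    by (simp add: basis_vec_def case_prod_beta)
  have e1: "?a0 * x False + ?a1 * x True = 0" and e2: "?b0 * x False + ?b1 * x True = 0"
    using assms(4,5) by (simp_all add: ip2_def real)
  have d: "?a0 * ?b1 - ?a1 * ?b0 \<noteq> 0"
    using basis_vec_det_nonzero[OF assms(1-3)] .
  have "(?a0 * ?b1 - ?a1 * ?b0) * x False = ?b1 * (?a0 * x False + ?a1 * x True)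
          - ?a1 * (?b0 * x False + ?b1 * x True)"
   and "(?a0 * ?b1 - ?a1 * ?b0) * x True = ?a0 * (?b0 * x False + ?b1 * x True)
          - ?b0 * (?a0 * x False + ?a1 * x True)"
    by (simp_all add: algebra_simps)
  then have "(?a0 * ?b1 - ?a1 * ?b0) * x False = 0" "(?a0 * ?b1 - ?a1 * ?b0) * x True = 0"
    unfolding e1 e2 by simp_all
  with d have "x False = 0" "x True = 0" by simp_all
  then show ?thesis by (intro ext) (metis (full_types))
qed

subsection \<open>Words of labels and covers\<close>

definition word_vec :: "nat \<Rightarrow> label list \<Rightarrow> bool list \<Rightarrow> complex" where
  "word_vec p w = tensor p (\<lambda>j. basis_vec (w ! j))"

definition words_orth :: "label list \<Rightarrow> label list \<Rightarrow> bool" where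
  "words_orth a b \<longleftrightarrow> list_ex (\<lambda>(l, l'). opposite l l') (zip a b)"

lemma words_orthD:
  assumes "words_orth a b"
  shows "\<exists>j<length a. opposite (a ! j) (b ! j)"
proof -
  obtain x where "x \<in> set (zip a b)" "opposite (fst x) (snd x)"
    using assms unfolding words_orth_def list_ex_iff by (auto simp: case_prod_beta)
  then show ?thesis unfolding in_set_zip by auto
qed

lemma qinner_word_vec:
  "qinner p (word_vec p a) (word_vec p b) = (\<Prod>j<p. ip2 (basis_vec (a ! j)) (basis_vec (b ! j)))"
  by (simp add: word_vec_def qinner_tensor)

text \<open>A word not yet covered forces
  a choice at one of the still free parties, so the search tree has at most p! leaves.\<close>
fun coverable :: "nat \<Rightarrow> (nat \<Rightarrow> label option) \<Rightarrow> label list list \<Rightarrow> bool" where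
  "coverable p c [] = True"
| "coverable p c (w # L) =
     (if list_ex (\<lambda>j. c j = Some (w ! j)) [0..<p] then coverable p c L
      else list_ex (\<lambda>j. c j = None \<and> coverable p (c(j := Some (w ! j))) L) [0..<p])"

lemma coverable_complete:
  assumes functional: "\<And>j l l'. X j l \<Longrightarrow> X j l' \<Longrightarrow> l = l'"
    and covers: "\<forall>w\<in>set L. \<exists>j<p. X j (w ! j)"
    and compatible: "\<And>j l. j < p \<Longrightarrow> c j = Some l \<Longrightarrow> X j l"
  shows "coverable p c L"
  using covers compatible
proof (induction L arbitrary: c)
  case Nil
  then show ?case by simp
next
  case (Cons w L)
  show ?case
  proof (cases "list_ex (\<lambda>j. c j = Some (w ! j)) [0..<p]")
    case True
    with Cons show ?thesis by simp
  next
    case False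
    from Cons.prems(1) obtain j where j: "j < p" "X j (w ! j)" by auto
    have "c j = None"
    proof (cases "c j")
      case (Some l)
      with j Cons.prems(2) functional have "l = w ! j" by blast
      with Some j False show ?thesis by (auto simp: list_ex_iff)
    qed
    moreover have "coverable p (c(j := Some (w ! j))) L"
      using Cons.prems j by (intro Cons.IH) (auto split: if_splits)
    ultimately show ?thesis
      using False j by (auto simp: list_ex_iff)
  qed
qed

subsection \<open>The unextendibility criterion\<close>

text \<open>A nonzero product vector orthogonal to all word vectors yields a cover: at party j
  take the (unique) label orthogonal to its j-th factor.\<close>
lemma orthogonal_product_vector_gives_cover:
  assumes words: "\<forall>w\<in>set L. length w = p \<and> (\<forall>l\<in>set w. fst l < 5)"
    and nonzero: "tensor p v \<noteq> (\<lambda>_. 0)"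
    and orth: "\<forall>w\<in>set L. qinner p (word_vec p w) (tensor p v) = 0"
  shows "coverable p (\<lambda>_. None) L"
proof -
  define X where "X j l \<longleftrightarrow> j < p \<and> fst l < 5 \<and> ip2 (basis_vec l) (v j) = 0" for j l
  have "l = l'" if "X j l" "X j l'" for j l l'
  proof (rule ccontr)
    assume "l \<noteq> l'"
    with that have "v j = (\<lambda>_. 0)" and "j < p"
      using orthogonal_to_two_labels[of l l' "v j"] by (auto simp: X_def)
    with nonzero tensor_zero_factor show False by blast
  qed
  moreover have "\<exists>j<p. X j (w ! j)" if w: "w \<in> set L" for w
  proof -
    have "(\<Prod>j<p. ip2 (basis_vec (w ! j)) (v j)) = 0"
      using orth w by (simp add: word_vec_def qinner_tensor)
    then obtain j where "j < p" "ip2 (basis_vec (w ! j)) (v j) = 0" by auto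
    moreover have "fst (w ! j) < 5"
      using words w \<open>j < p\<close> by (auto dest: nth_mem)
    ultimately show ?thesis by (auto simp: X_def)
  qed
  ultimately show ?thesis
    by (intro coverable_complete[of X]) auto
qed

lemma word_vectors_UPB:
  assumes words: "\<forall>w\<in>set L. length w = p \<and> (\<forall>l\<in>set w. fst l < 5)"
    and distinct: "distinct L"
    and orth: "\<forall>a\<in>set L. \<forall>b\<in>set L. a \<noteq> b \<longrightarrow> words_orth a b"
    and no_cover: "\<not> coverable p (\<lambda>_. None) L"
  shows "is_UPB p (word_vec p ` set L) \<and> card (word_vec p ` set L) = length L"
proof -
  have unit: "qinner p (word_vec p a) (word_vec p a) = 1" for a
    by (simp add: qinner_word_vec basis_vec_unit)
  have ortho: "qinner p (word_vec p a) (word_vec p b) = 0"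
    if "a \<in> set L" "b \<in> set L" "a \<noteq> b" for a b
  proof -
    have "words_orth a b" using orth that by blast
    then obtain j where "j < length a" "opposite (a ! j) (b ! j)"
      using words_orthD by blast
    moreover have "length a = p" using words that by blast
    ultimately have "j \<in> {..<p}" "ip2 (basis_vec (a ! j)) (basis_vec (b ! j)) = 0"
      by (auto simp: basis_vec_opposite)
    then show ?thesis
      unfolding qinner_word_vec by (blast intro: prod_zero)
  qed
  have "inj_on (word_vec p) (set L)"
  proof (rule inj_onI, rule ccontr)
    fix a b assume "a \<in> set L" "b \<in> set L" "word_vec p a = word_vec p b" "a \<noteq> b"
    then show False using unit[of a] ortho[of a b] by simp
  qed
  then have card: "card (word_vec p ` set L) = length L"
    by (simp add: card_image distinct_card[OF distinct])
  have unext: "\<exists>s\<in>word_vec p ` set L. qinner p s u \<noteq> 0"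
    if product: "product_vec p u" and nonzero: "u \<noteq> (\<lambda>_. 0)" for u
  proof (rule ccontr)
    assume "\<not> ?thesis"
    then have "\<forall>w\<in>set L. qinner p (word_vec p w) u = 0" by auto
    moreover obtain v where "u = tensor p v"
      using product unfolding product_vec_def by blast
    ultimately have "coverable p (\<lambda>_. None) L"
      using orthogonal_product_vector_gives_cover[OF words] nonzero by simp
    with no_cover show False ..
  qed
  have product: "product_vec p (word_vec p w)" for w
    unfolding product_vec_def word_vec_def by blast
  have "is_UPB p (word_vec p ` set L)"
    unfolding is_UPB_def
  proof (intro conjI)
    show "\<forall>s\<in>word_vec p ` set L. product_vec p s \<and> qinner p s s = 1"
      using product unit by blast
    show "\<forall>s\<in>word_vec p ` set L. \<forall>t\<in>word_vec p ` set L. s \<noteq> t \<longrightarrow> qinner p s t = 0"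
      by (auto intro: ortho)
    show "\<forall>u. product_vec p u \<and> u \<noteq> (\<lambda>_. 0) \<and> u \<notin> word_vec p ` set L \<longrightarrow>
            (\<exists>s\<in>word_vec p ` set L. qinner p s u \<noteq> 0)"
      using unext by blast
  qed simp
  with card show ?thesis by simp
qed

definition upb_5_8 :: "label list list" where
  "upb_5_8 = [[(1,True),(1,True),(1,True),(1,False),(0,False)],
    [(2,False),(1,False),(2,False),(0,True),(2,False)], [(2,True),(0,False),(0,False),(2,True),(0,True)],
    [(2,True),(1,False),(2,False),(2,False),(2,False)], [(1,False),(2,True),(0,True),(1,False),(2,True)],
    [(1,True),(0,True),(2,True),(1,True),(1,False)], [(2,False),(2,False),(1,False),(0,False),(1,True)],
    [(1,False),(1,True),(1,True),(1,True),(0,False)]]"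

definition upb_5_9 :: "label list list" where
  "upb_5_9 = [[(2,False),(2,False),(2,False),(3,True),(3,False)],
    [(3,False),(2,True),(1,True),(3,True),(0,False)], [(3,True),(2,True),(1,False),(1,False),(1,False)],
    [(3,True),(3,True),(3,False),(1,True),(3,True)], [(0,False),(0,False),(3,True),(3,False),(1,True)],
    [(3,True),(0,True),(1,True),(1,False),(3,True)], [(2,True),(2,False),(3,False),(1,False),(3,False)],
    [(3,False),(0,True),(1,False),(1,False),(3,True)], [(0,True),(3,False),(2,True),(1,True),(0,True)]]"

definition upb_5_10 :: "label list list" where
  "upb_5_10 = [[(2,False),(0,True),(1,False),(1,False),(3,True)],
    [(2,True),(2,True),(2,False),(1,False),(3,True)], [(2,True),(3,False),(2,True),(1,True),(1,True)],
    [(3,True),(3,False),(0,True),(1,False),(3,False)], [(2,True),(3,True),(2,True),(2,True),(2,True)],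
    [(3,False),(2,False),(1,True),(2,False),(1,False)], [(3,True),(0,True),(2,False),(1,True),(2,True)],
    [(2,False),(2,True),(2,True),(1,True),(0,True)], [(2,False),(0,False),(0,False),(2,True),(0,False)],
    [(2,True),(3,True),(1,False),(1,True),(2,False)]]"

definition upb_6_9 :: "label list list" where
  "upb_6_9 = [[(3,True),(0,True),(1,False),(1,True),(3,False),(4,True)],
    [(3,False),(3,True),(2,True),(2,True),(3,False),(3,True)],
    [(1,False),(0,True),(4,True),(1,False),(3,True),(4,True)],
    [(0,True),(3,False),(4,False),(1,False),(0,False),(2,False)],
    [(0,False),(1,False),(3,False),(2,False),(2,True),(4,False)],
    [(2,False),(4,False),(3,True),(1,True),(3,True),(3,True)],
    [(1,True),(1,True),(1,True),(0,True),(0,True),(3,False)],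
    [(2,True),(0,False),(2,False),(0,False),(2,False),(2,True)],
    [(1,False),(4,True),(2,True),(1,True),(3,True),(4,True)]]"

text \<open>The criterion in the form used for the examples: all hypotheses are finite
  computations on the word list, decided by evaluation with code_simp.\<close>
lemma UPB_of_words:
  assumes "(\<forall>w\<in>set L. length w = p \<and> (\<forall>l\<in>set w. fst l < 5)) \<and> distinct L \<and>
      (\<forall>a\<in>set L. \<forall>b\<in>set L. a \<noteq> b \<longrightarrow> words_orth a b) \<and> \<not> coverable p (\<lambda>_. None) L"
    and "length L = n"
  shows "\<exists>S. is_UPB p S \<and> card S = n"
  using word_vectors_UPB assms by blast

lemma upb_5_8: "\<exists>S. is_UPB 5 S \<and> card S = 8"
  by (rule UPB_of_words[of upb_5_8]; code_simp)

lemma upb_5_9: "\<exists>S. is_UPB 5 S \<and> card S = 9"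
  by (rule UPB_of_words[of upb_5_9]; code_simp)

lemma upb_5_10: "\<exists>S. is_UPB 5 S \<and> card S = 10"
  by (rule UPB_of_words[of upb_5_10]; code_simp)

lemma upb_6_9: "\<exists>S. is_UPB 6 S \<and> card S = 9"
  by (rule UPB_of_words[of upb_6_9]; code_simp)

theorem mainTheorem12:
  shows "(\<exists>S. is_UPB 5 S \<and> card S = 8) \<and> (\<exists>S. is_UPB 5 S \<and> card S = 9) \<and>
         (\<exists>S. is_UPB 5 S \<and> card S = 10) \<and> (\<exists>S. is_UPB 6 S \<and> card S = 9)"
  using upb_5_8 upb_5_9 upb_5_10 upb_6_9 by blast

end
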